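(* Let $G$ be a finite simple graph, let $I$ be a maximum critical independent set in $G$, and let $X=I\cup N(I)$. Then $\operatorname{diadem}(G)\subseteq \operatorname{diadem}(G[X])$ and $\operatorname{nucleus}(G[X])\subseteq \operatorname{nucleus}(G)$.
   Context: For a graph $H$ and $Y\subseteq V(H)$, $N_H(Y)$ is the set of vertices of $H$ adjacent to some vertex of $Y$, and $d_H(Y)=|Y|-|N_H(Y)|$. An independent set $S$ of $H$ is critical in $H$ if $d_H(S)=\max\{d_H(Y):Y\subseteq V(H)\}$; the empty set may be critical. A maximum critical independent set of $H$ is a critical independent set of $H$ of maximum cardinality. $\operatorname{nucleus}(H)$ and $\operatorname{diadem}(H)$ are, respectively, the intersection and the union of all maximum critical independent sets of $H$. $N(I)=N_G(I)$, and $G[X]$ is the subgraph of $G$ induced by $X$. *)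

theory Defs
  imports Main
begin

definition simple_graph :: "'a set \<Rightarrow> ('a \<Rightarrow> 'a \<Rightarrow> bool) \<Rightarrow> bool" where
  "simple_graph V E \<longleftrightarrow> finite V \<and> (\<forall>u v. E u v \<longrightarrow> u \<in> V \<and> v \<in> V)
     \<and> (\<forall>u v. E u v \<longrightarrow> E v u) \<and> (\<forall>v. \<not> E v v)"

definition induced_edges :: "('a \<Rightarrow> 'a \<Rightarrow> bool) \<Rightarrow> 'a set \<Rightarrow> ('a \<Rightarrow> 'a \<Rightarrow> bool)" where
  "induced_edges E X = (\<lambda>u v. u \<in> X \<and> v \<in> X \<and> E u v)"

definition nbhd :: "'a set \<Rightarrow> ('a \<Rightarrow> 'a \<Rightarrow> bool) \<Rightarrow> 'a set \<Rightarrow> 'a set" where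
  "nbhd V E Y = {v \<in> V. \<exists>y\<in>Y. E y v}"

definition diff :: "'a set \<Rightarrow> ('a \<Rightarrow> 'a \<Rightarrow> bool) \<Rightarrow> 'a set \<Rightarrow> int" where
  "diff V E Y = int (card Y) - int (card (nbhd V E Y))"

definition independent :: "'a set \<Rightarrow> ('a \<Rightarrow> 'a \<Rightarrow> bool) \<Rightarrow> 'a set \<Rightarrow> bool" where
  "independent V E S \<longleftrightarrow> S \<subseteq> V \<and> (\<forall>u\<in>S. \<forall>v\<in>S. \<not> E u v)"

definition critical_independent :: "'a set \<Rightarrow> ('a \<Rightarrow> 'a \<Rightarrow> bool) \<Rightarrow> 'a set \<Rightarrow> bool" where
  "critical_independent V E S \<longleftrightarrow> independent V E S \<and>
     diff V E S = Max (diff V E ` Pow V)"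

definition max_critical_independent :: "'a set \<Rightarrow> ('a \<Rightarrow> 'a \<Rightarrow> bool) \<Rightarrow> 'a set \<Rightarrow> bool" where
  "max_critical_independent V E S \<longleftrightarrow> critical_independent V E S \<and>
     (\<forall>T. critical_independent V E T \<longrightarrow> card T \<le> card S)"

definition nucleus :: "'a set \<Rightarrow> ('a \<Rightarrow> 'a \<Rightarrow> bool) \<Rightarrow> 'a set" where
  "nucleus V E = \<Inter> {S. max_critical_independent V E S}"

definition diadem :: "'a set \<Rightarrow> ('a \<Rightarrow> 'a \<Rightarrow> bool) \<Rightarrow> 'a set" where
  "diadem V E = \<Union> {S. max_critical_independent V E S}"

end

theory Submission
  imports Defs
begin

text \<open>Write \<open>d\<close> for the critical difference of \<open>G\<close>. Since \<open>I\<close> is critical, every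
  \<open>S \<subseteq> N(I)\<close> has at least \<open>|S|\<close> neighbours in \<open>I\<close>: otherwise \<open>I - N(S)\<close> would have larger
  difference than \<open>I\<close>. Splitting any \<open>Y \<subseteq> X\<close> into its parts in \<open>I\<close> and in \<open>N(I)\<close>, this
  shows that \<open>G[X]\<close> also has critical difference \<open>d\<close> and that its critical independent sets have
  at most \<open>|I|\<close> elements. Conversely, if \<open>J\<close> is critical independent in \<open>G\<close>, supermodularity
  of the difference together with the same inequality shows that \<open>I \<union> (J - X)\<close> is critical
  independent, so maximality of \<open>I\<close> forces \<open>J \<subseteq> X\<close>. Hence the maximum critical independent
  sets of \<open>G\<close> are among those of \<open>G[X]\<close>.\<close>

lemma simple_graph_finite: "simple_graph V E \<Longrightarrow> finite V"
  by (simp add: simple_graph_def)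

lemma simple_graph_sym: "simple_graph V E \<Longrightarrow> E u v \<Longrightarrow> E v u"
  by (simp add: simple_graph_def)

lemma nbhd_subset: "nbhd V E Y \<subseteq> V"
  by (auto simp: nbhd_def)

lemma nbhd_mono: "Y \<subseteq> Z \<Longrightarrow> nbhd V E Y \<subseteq> nbhd V E Z"
  by (auto simp: nbhd_def)

lemma nbhd_Un: "nbhd V E (Y \<union> Z) = nbhd V E Y \<union> nbhd V E Z"
  by (auto simp: nbhd_def)

lemma nbhd_induced_edges:
  "X \<subseteq> V \<Longrightarrow> Y \<subseteq> X \<Longrightarrow> nbhd X (induced_edges E X) Y = nbhd V E Y \<inter> X"
  by (auto simp: nbhd_def induced_edges_def)

lemma independent_Int_nbhd: "independent V E S \<Longrightarrow> S \<inter> nbhd V E S = {}"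
  by (auto simp: nbhd_def independent_def)

lemma card_disjoint_Un_le:
  "finite C \<Longrightarrow> A \<union> B \<subseteq> C \<Longrightarrow> A \<inter> B = {} \<Longrightarrow> card A + card B \<le> card C"
  by (metis card_Un_disjoint card_mono finite_Un finite_subset)

abbreviation critical_difference :: "'a set \<Rightarrow> ('a \<Rightarrow> 'a \<Rightarrow> bool) \<Rightarrow> int" where
  "critical_difference V E \<equiv> Max (diff V E ` Pow V)"

lemma diff_le_critical_difference:
  "finite V \<Longrightarrow> Y \<subseteq> V \<Longrightarrow> diff V E Y \<le> critical_difference V E"
  by (intro Max_ge) auto

lemma diff_supermodular:
  assumes "finite V" "Y \<subseteq> V" "Z \<subseteq> V"
  shows "diff V E Y + diff V E Z \<le> diff V E (Y \<union> Z) + diff V E (Y \<inter> Z)"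
proof -
  have fin: "finite Y" "finite Z" "finite (nbhd V E Y)" "finite (nbhd V E Z)"
    using assms finite_subset[OF nbhd_subset] by (auto intro: finite_subset)
  have "card (nbhd V E (Y \<inter> Z)) \<le> card (nbhd V E Y \<inter> nbhd V E Z)"
    using fin by (intro card_mono) (auto simp: nbhd_def)
  then show ?thesis
    using card_Un_Int[of Y Z] card_Un_Int[of "nbhd V E Y" "nbhd V E Z"] fin
    unfolding diff_def nbhd_Un by linarith
qed

locale critical_independent_set =
  fixes V :: "'a set" and E :: "'a \<Rightarrow> 'a \<Rightarrow> bool" and I :: "'a set"
  assumes graph: "simple_graph V E"
    and critical: "critical_independent V E I"
begin

abbreviation X :: "'a set" where
  "X \<equiv> I \<union> nbhd V E I"

lemma finite_V: "finite V"
  using graph by (rule simple_graph_finite)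

lemma I_independent: "independent V E I"
  using critical by (simp add: critical_independent_def)

lemma I_subset: "I \<subseteq> V"
  using I_independent by (simp add: independent_def)

lemma finite_I: "finite I"
  using finite_subset[OF I_subset finite_V] .

lemma X_subset: "X \<subseteq> V"
  using I_subset nbhd_subset[of V E I] by (rule Un_least)

lemma I_Int_nbhd: "I \<inter> nbhd V E I = {}"
  using I_independent by (rule independent_Int_nbhd)

lemma diff_I: "diff V E I = critical_difference V E"
  using critical by (simp add: critical_independent_def)

lemma diff_le: "Y \<subseteq> V \<Longrightarrow> diff V E Y \<le> critical_difference V E"
  using finite_V by (rule diff_le_critical_difference)

lemma card_split:
  assumes "Y \<subseteq> X"
  shows "card Y = card (Y \<inter> I) + card (Y \<inter> nbhd V E I)"
proof -
  have "finite Y"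
    using assms X_subset finite_V by (auto intro: finite_subset)
  moreover have "(Y \<inter> I) \<inter> (Y \<inter> nbhd V E I) = {}"
    using I_Int_nbhd by blast
  ultimately have "card ((Y \<inter> I) \<union> (Y \<inter> nbhd V E I)) = card (Y \<inter> I) + card (Y \<inter> nbhd V E I)"
    by (intro card_Un_disjoint) auto
  moreover have "(Y \<inter> I) \<union> (Y \<inter> nbhd V E I) = Y"
    using assms by blast
  ultimately show ?thesis
    by simp
qed

lemma card_le_card_nbhd_Int:
  assumes S: "S \<subseteq> nbhd V E I"
  shows "card S \<le> card (nbhd V E S \<inter> I)"
proof -
  define W where "W = I - nbhd V E S"
  have "nbhd V E W \<union> S \<subseteq> nbhd V E I"
    using S nbhd_mono[of W I V E] by (auto simp: W_def)
  moreover have "nbhd V E W \<inter> S = {}"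
    using I_subset by (auto simp: W_def nbhd_def dest: simple_graph_sym[OF graph])
  ultimately have "card (nbhd V E W) + card S \<le> card (nbhd V E I)"
    using finite_subset[OF nbhd_subset finite_V] by (intro card_disjoint_Un_le)
  moreover have "card I = card (nbhd V E S \<inter> I) + card W"
    unfolding W_def using card_Int_Diff[OF finite_I, of "nbhd V E S"] by (simp add: Int_commute)
  moreover have "diff V E W \<le> diff V E I"
    using diff_I diff_le[of W] I_subset by (auto simp: W_def)
  ultimately show ?thesis
    unfolding diff_def by linarith
qed

lemma card_nbhd_induced_ge:
  assumes Y: "Y \<subseteq> X"
  shows "card (nbhd V E (Y \<inter> I)) + card (nbhd V E (Y \<inter> nbhd V E I) \<inter> I)
    \<le> card (nbhd X (induced_edges E X) Y)"
proof (rule card_disjoint_Un_le)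
  show "finite (nbhd X (induced_edges E X) Y)"
    using finite_subset[OF X_subset finite_V] nbhd_subset by (rule finite_subset[rotated])
  have "nbhd V E (Y \<inter> I) \<subseteq> nbhd V E I"
    by (rule nbhd_mono) blast
  then show "nbhd V E (Y \<inter> I) \<union> nbhd V E (Y \<inter> nbhd V E I) \<inter> I
      \<subseteq> nbhd X (induced_edges E X) Y"
    unfolding nbhd_induced_edges[OF X_subset Y]
    using nbhd_mono[of "Y \<inter> I" Y V E] nbhd_mono[of "Y \<inter> nbhd V E I" Y V E] by blast
  show "nbhd V E (Y \<inter> I) \<inter> (nbhd V E (Y \<inter> nbhd V E I) \<inter> I) = {}"
    using nbhd_mono[of "Y \<inter> I" I V E] I_Int_nbhd by blast
qed

lemma diff_induced_le:
  assumes Y: "Y \<subseteq> X"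
  shows "diff X (induced_edges E X) Y \<le> critical_difference V E"
proof -
  have "card (Y \<inter> nbhd V E I) \<le> card (nbhd V E (Y \<inter> nbhd V E I) \<inter> I)"
    by (rule card_le_card_nbhd_Int) blast
  moreover have "diff V E (Y \<inter> I) \<le> critical_difference V E"
    using I_subset by (intro diff_le) blast
  ultimately show ?thesis
    using card_nbhd_induced_ge[OF Y] card_split[OF Y] unfolding diff_def by linarith
qed

lemma diff_induced_I: "diff X (induced_edges E X) I = critical_difference V E"
  using diff_I nbhd_induced_edges[OF X_subset, of I E] by (simp add: diff_def Int_absorb2)

lemma critical_difference_induced:
  "critical_difference X (induced_edges E X) = critical_difference V E"
proof (rule Max_eqI)
  show "finite (diff X (induced_edges E X) ` Pow X)"
    using finite_subset[OF X_subset finite_V] by simp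
  show "critical_difference V E \<in> diff X (induced_edges E X) ` Pow X"
    using diff_induced_I by (intro image_eqI[of _ _ I]) auto
qed (use diff_induced_le in auto)

lemma card_critical_independent_induced_le:
  assumes T: "critical_independent X (induced_edges E X) T"
  shows "card T \<le> card I"
proof -
  have TX: "T \<subseteq> X"
    and T_indep: "\<forall>u\<in>T. \<forall>v\<in>T. \<not> induced_edges E X u v"
    and diff_T: "diff X (induced_edges E X) T = critical_difference V E"
    using T critical_difference_induced by (auto simp: critical_independent_def independent_def)
  define A where "A = nbhd V E (T \<inter> nbhd V E I) \<inter> I"
  have "card (T \<inter> nbhd V E I) \<le> card A"
    unfolding A_def by (rule card_le_card_nbhd_Int) blast
  moreover have "diff V E (T \<inter> I) \<le> critical_difference V E"
    using I_subset by (intro diff_le) blast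
  ultimately have card_A: "card A = card (T \<inter> nbhd V E I)"
    using card_nbhd_induced_ge[OF TX] card_split[OF TX] diff_T
    unfolding diff_def A_def by linarith
  have "(T \<inter> I) \<inter> A = {}"
    using T_indep TX by (auto simp: A_def nbhd_def induced_edges_def)
  then have "card (T \<inter> I) + card A \<le> card I"
    using finite_I by (intro card_disjoint_Un_le) (auto simp: A_def)
  then show ?thesis
    using card_split[OF TX] card_A by simp
qed

lemma critical_independent_induced:
  assumes J: "critical_independent V E J" and JX: "J \<subseteq> X"
  shows "critical_independent X (induced_edges E X) J"
proof -
  have "card (nbhd X (induced_edges E X) J) \<le> card (nbhd V E J)"
    unfolding nbhd_induced_edges[OF X_subset JX]
    using finite_subset[OF nbhd_subset finite_V] by (intro card_mono) auto
  then have "critical_difference V E \<le> diff X (induced_edges E X) J"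
    using J by (simp add: critical_independent_def diff_def)
  then show ?thesis
    using J JX diff_induced_le[OF JX] critical_difference_induced
    by (auto simp: critical_independent_def independent_def induced_edges_def)
qed

lemma critical_independent_Un_outside:
  assumes J: "critical_independent V E J"
  shows "critical_independent V E (I \<union> (J - X))"
proof -
  define B where "B = J - X"
  define C where "C = J \<inter> nbhd V E I"
  have JV: "J \<subseteq> V" and J_indep: "\<forall>u\<in>J. \<forall>v\<in>J. \<not> E u v"
    and diff_J: "diff V E J = critical_difference V E"
    using J by (auto simp: critical_independent_def independent_def)
  have no_edge: "\<not> E u b" and no_edge': "\<not> E b u" if "u \<in> I" "b \<in> B" for u b
    using that JV simple_graph_sym[OF graph] by (auto simp: B_def nbhd_def)
  have indep: "independent V E (I \<union> B)"
    using I_independent JV J_indep no_edge no_edge'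
    unfolding independent_def B_def by blast
  have "diff V E I + diff V E J \<le> diff V E (I \<union> J) + diff V E (I \<inter> J)"
    using finite_V I_subset JV by (rule diff_supermodular)
  moreover have "diff V E (I \<inter> J) \<le> critical_difference V E"
    using I_subset by (intro diff_le) blast
  ultimately have diff_IJ: "critical_difference V E \<le> diff V E (I \<union> J)"
    using diff_I diff_J by linarith
  have IJ: "I \<union> J = (I \<union> B) \<union> C" and "(I \<union> B) \<inter> C = {}"
    using I_Int_nbhd by (auto simp: B_def C_def)
  then have card_IJ: "card (I \<union> J) = card (I \<union> B) + card C"
    using finite_I finite_subset[OF JV finite_V] by (simp add: B_def C_def card_Un_disjoint)
  have "nbhd V E (I \<union> B) \<inter> (nbhd V E C \<inter> I) = {}"
    using I_Int_nbhd no_edge' by (auto simp: nbhd_Un nbhd_def)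
  moreover have "nbhd V E (I \<union> B) \<union> nbhd V E C \<inter> I \<subseteq> nbhd V E (I \<union> J)"
    unfolding IJ nbhd_Un by blast
  ultimately have "card (nbhd V E (I \<union> B)) + card (nbhd V E C \<inter> I) \<le> card (nbhd V E (I \<union> J))"
    using finite_subset[OF nbhd_subset finite_V] by (intro card_disjoint_Un_le)
  moreover have "card C \<le> card (nbhd V E C \<inter> I)"
    by (rule card_le_card_nbhd_Int) (simp add: C_def)
  ultimately have "critical_difference V E \<le> diff V E (I \<union> B)"
    using diff_IJ card_IJ unfolding diff_def by linarith
  then show ?thesis
    using indep diff_le[of "I \<union> B"] by (auto simp: critical_independent_def independent_def B_def)
qed

context
  assumes maximum: "max_critical_independent V E I"
begin

lemma critical_independent_subset_X:
  assumes J: "critical_independent V E J"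
  shows "J \<subseteq> X"
proof -
  have "finite (I \<union> (J - X))"
    using J finite_V finite_I
    by (auto simp: critical_independent_def independent_def intro: finite_subset)
  moreover have "card (I \<union> (J - X)) \<le> card I"
    using maximum critical_independent_Un_outside[OF J] by (simp add: max_critical_independent_def)
  ultimately have "I = I \<union> (J - X)"
    by (intro card_seteq) auto
  then show ?thesis
    by blast
qed

lemma max_critical_independent_induced:
  assumes J: "max_critical_independent V E J"
  shows "max_critical_independent X (induced_edges E X) J"
  unfolding max_critical_independent_def
proof (intro conjI allI impI)
  have J_crit: "critical_independent V E J"
    using J by (simp add: max_critical_independent_def)
  then show "critical_independent X (induced_edges E X) J"
    by (intro critical_independent_induced critical_independent_subset_X)
  have "card I \<le> card J"
    using J critical by (simp add: max_critical_independent_def)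
  then show "card T \<le> card J" if "critical_independent X (induced_edges E X) T" for T
    using card_critical_independent_induced_le[OF that] by simp
qed

end

end

theorem lemma2p2:
  fixes V :: "'a set" and E :: "'a \<Rightarrow> 'a \<Rightarrow> bool" and I :: "'a set"
  assumes "simple_graph V E"
    and "max_critical_independent V E I"
  defines "X \<equiv> I \<union> nbhd V E I"
  shows "diadem V E \<subseteq> diadem X (induced_edges E X)
       \<and> nucleus X (induced_edges E X) \<subseteq> nucleus V E"
proof -
  interpret critical_independent_set V E I
    using assms by unfold_locales (simp_all add: max_critical_independent_def)
  have "max_critical_independent X (induced_edges E X) J"
    if "max_critical_independent V E J" for J
    using max_critical_independent_induced[OF assms(2) that] by (simp add: X_def)
  then show ?thesis
    unfolding diadem_def nucleus_def by blast
qed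

end
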